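(* For $0\le v\le 1$ and $a,b>0$, $$L(a,b)\le A\left(L_v(a,b),L_{1-v}(a,b)\right)\le A(a,b)$$ and $$L(a,b)\le L\left(A_v(a,b),A_{1-v}(a,b)\right)\le A(a,b).$$
   Context: For $x,y>0$: $A(x,y):=\frac{x+y}{2}$, $A_v(x,y):=(1-v)x+vy$, and the logarithmic mean $L(x,y):=\frac{x-y}{\log x-\log y}$ for $x\neq y$, $L(x,x):=x$. For $0<v<1$ and $a\ne b$ the weighted logarithmic mean is $$L_v(a,b):=\frac{1}{\log a-\log b}\left(\frac{1-v}{v}(a-a^{1-v}b^v)+\frac{v}{1-v}(a^{1-v}b^v-b)\right),$$ with $L_v(a,a):=a$, and for the endpoint values (by continuity in $v$) $L_0(a,b):=a$, $L_1(a,b):=b$. Note $L_{1/2}(a,b)=L(a,b)$. *)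

theory Defs
  imports Complex_Main
begin

definition AM :: "real \<Rightarrow> real \<Rightarrow> real" where
  "AM x y = (x + y) / 2"

definition AMw :: "real \<Rightarrow> real \<Rightarrow> real \<Rightarrow> real" where
  "AMw v x y = (1 - v) * x + v * y"

definition LM :: "real \<Rightarrow> real \<Rightarrow> real" where
  "LM x y = (if x = y then x else (x - y) / (ln x - ln y))"

definition LMw :: "real \<Rightarrow> real \<Rightarrow> real \<Rightarrow> real" where
  "LMw v a b =
    (if v = 0 then a
     else if v = 1 then b
     else if a = b then a
     else (1 / (ln a - ln b)) *
          ((1 - v) / v * (a - a powr (1 - v) * b powr v)
           + v / (1 - v) * (a powr (1 - v) * b powr v - b)))"

end

theory Submission
  imports Defs "HOL-Analysis.Derivative"
begin

(*
  Put a = m e^u and b = m e^(-u). Then L(a,b) = m sinh u / u, A(a,b) = m cosh u, and with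
  w = 1 - 2v the two weighted logarithmic means combine to
    (1 - w^2) u A(L_v(a,b), L_(1-v)(a,b)) = m ((1 + w^2) sinh u - 2 w sinh (w u)).
  Both bounds of the first chain then follow from the convexity of sinh on [0, oo):
  sinh (z u) <= z sinh u, and the tangent inequality sinh u - sinh (z u) <= (1 - z) u cosh u.

  For the second chain put a, b = p +- d, so that A_v, A_(1-v) = p +- (1 - 2v) d.
  Since L(p + e, p - e) = e / artanh (e / p) and artanh is convex on [0, 1) with artanh 0 = 0,
  L(p + e, p - e) decreases in |e|, from the value p at e = 0.
*)

lemma convex_on_scale_le:
  fixes f :: "real \<Rightarrow> real"
  assumes "convex_on A f" "0 \<in> A" "x \<in> A" "f 0 = 0" "0 \<le> t" "t \<le> 1"
  shows "f (t * x) \<le> t * f x"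
  using convex_onD[OF assms(1) assms(5,6,2,3)] assms(4) by simp

lemma convex_on_sinh_nonneg: "convex_on {0..} (sinh :: real \<Rightarrow> real)"
  by (rule convex_on_realI[where f' = cosh])
     (auto intro!: derivative_eq_intros convex_connected simp: cosh_real_nonneg_le_iff)

lemma convex_on_artanh_nonneg: "convex_on {0..<1} (artanh :: real \<Rightarrow> real)"
proof (rule convex_on_realI[where f' = "\<lambda>x. 1 / (1 - x\<^sup>2)"])
  show "connected {0..<1::real}"
    by (simp add: convex_connected)
  show "(artanh has_real_derivative 1 / (1 - x\<^sup>2)) (at x)" if "x \<in> {0..<1}" for x :: real
    using that by (intro artanh_real_has_field_derivative) auto
  show "1 / (1 - x\<^sup>2) \<le> 1 / (1 - y\<^sup>2)" if "x \<in> {0..<1}" "y \<in> {0..<1}" "x \<le> y" for x y :: real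
    using that by (intro divide_left_mono mult_pos_pos power_mono) (auto simp: power_less_one_iff abs_square_less_1)
qed

lemma artanh_pos: "0 < x \<Longrightarrow> x < 1 \<Longrightarrow> 0 < artanh (x :: real)"
  by (simp add: artanh_def)

lemma sinh_mult_le:
  fixes t u :: real
  assumes "0 \<le> t" "t \<le> 1" "0 \<le> u"
  shows "sinh (t * u) \<le> t * sinh u"
  using assms by (intro convex_on_scale_le[OF convex_on_sinh_nonneg]) auto

lemma sinh_diff_le:
  fixes x y :: real
  assumes "0 \<le> x" "x \<le> y"
  shows "sinh y - sinh x \<le> (y - x) * cosh y"
proof (cases "y = 0")
  case False
  with assms have "y \<in> interior {0..}" by simp
  then have "sinh x - sinh y \<ge> cosh y * (x - y)"
    using assms by (intro convex_on_imp_above_tangent[OF convex_on_sinh_nonneg])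
      (auto intro!: derivative_eq_intros convex_connected)
  then show ?thesis by (simp add: algebra_simps)
qed (use assms in simp)

lemma sinh_combination_le:
  fixes u z :: real
  assumes "0 \<le> u" "0 \<le> z" "z \<le> 1"
  shows "(1 + z\<^sup>2) * sinh u - 2 * z * sinh (z * u) \<le> (1 - z\<^sup>2) * u * cosh u"
proof -
  have "z * u \<le> u"
    using assms by (simp add: mult_left_le_one_le)
  then have "sinh u - sinh (z * u) \<le> (1 - z) * u * cosh u"
    using sinh_diff_le[of "z * u" u] assms by (simp add: algebra_simps)
  then have "2 * z * (sinh u - sinh (z * u)) \<le> 2 * z * ((1 - z) * u * cosh u)"
    using assms by (intro mult_left_mono) auto
  moreover have "(1 - z)\<^sup>2 * sinh u \<le> (1 - z)\<^sup>2 * (u * cosh u)"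
    using sinh_diff_le[of 0 u] assms by (intro mult_left_mono) auto
  ultimately show ?thesis
    by (simp add: algebra_simps power2_eq_square)
qed

lemma LM_commute: "LM x y = LM y x"
  unfolding LM_def using minus_divide_divide[of "x - y" "ln x - ln y"] by auto

lemma AM_commute: "AM x y = AM y x"
  unfolding AM_def by simp

lemma LMw_commute: "LMw v b a = LMw (1 - v) a b"
proof -
  define G where "G = a powr v * b powr (1 - v)"
  have G: "b powr (1 - v) * a powr v = G"
    by (simp add: G_def)
  have swap: "1 / (ln b - ln a) * (\<alpha> * (b - G) + \<beta> * (G - a))
      = 1 / (ln a - ln b) * (\<beta> * (a - G) + \<alpha> * (G - b))" for \<alpha> \<beta> :: real
  proof -
    have "\<alpha> * (b - G) + \<beta> * (G - a) = - (\<beta> * (a - G) + \<alpha> * (G - b))"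
      by (simp add: algebra_simps)
    moreover have "ln b - ln a = - (ln a - ln b)"
      by simp
    ultimately show ?thesis
      by (simp only: divide_minus_right mult_minus_left mult_minus_right minus_minus)
  qed
  have v: "1 - (1 - v) = v"
    by simp
  show ?thesis
    unfolding LMw_def v G G_def[symmetric] using swap[of "(1 - v) / v" "v / (1 - v)"] by auto
qed

lemma exp_coordinates:
  fixes a b :: real
  assumes "0 < b" "b \<le> a"
  obtains m u where "0 < m" "0 \<le> u" "a = m * exp u" "b = m * exp (- u)"
proof
  let ?m = "exp ((ln a + ln b) / 2)" and ?u = "(ln a - ln b) / 2"
  show "0 < ?m" "0 \<le> ?u"
    using assms by auto
  have "?m * exp ?u = exp (ln a)" "?m * exp (- ?u) = exp (ln b)"
    unfolding exp_add[symmetric] by (simp_all add: field_simps)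
  then show "a = ?m * exp ?u" "b = ?m * exp (- ?u)"
    using assms by simp_all
qed

lemma LM_exp_coordinates:
  fixes m u :: real
  assumes "0 < m" "u \<noteq> 0"
  shows "u * LM (m * exp u) (m * exp (- u)) = m * sinh u"
proof -
  have "ln (m * exp u) - ln (m * exp (- u)) = 2 * u"
    using assms by (simp add: ln_mult)
  moreover have "m * exp u \<noteq> m * exp (- u)"
    using assms by simp
  ultimately show ?thesis
    by (simp add: LM_def sinh_field_def field_simps)
qed

lemma AM_exp_coordinates: "AM (m * exp u) (m * exp (- u)) = m * cosh (u :: real)"
  by (simp add: AM_def cosh_def field_simps)

lemma powr_exp_coordinates:
  fixes m u t :: real
  assumes "0 < m"
  shows "(m * exp u) powr (1 - t) * (m * exp (- u)) powr t = m * exp ((1 - 2 * t) * u)"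
  using assms by (simp add: powr_mult exp_powr_real powr_add[symmetric] exp_add[symmetric] algebra_simps)

lemma LM_le_AM:
  fixes a b :: real
  assumes "0 < a" "0 < b"
  shows "LM a b \<le> AM a b"
proof -
  have ordered_case: "LM x y \<le> AM x y" if ordered: "0 < y" "y \<le> x" for x y :: real
  proof -
    obtain m u where mu: "0 < m" "0 \<le> u" "x = m * exp u" "y = m * exp (- u)"
      using exp_coordinates[OF ordered] .
    show ?thesis
    proof (cases "u = 0")
      case True
      then show ?thesis by (simp add: mu LM_def AM_def)
    next
      case False
      with mu have "u * LM x y = m * sinh u"
        using LM_exp_coordinates by simp
      also have "\<dots> \<le> m * (u * cosh u)"
        using sinh_diff_le[of 0 u] mu by simp
      also have "\<dots> = u * AM x y"
        using mu by (simp add: AM_exp_coordinates)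
      finally show ?thesis
        using False mu by (simp add: mult_le_cancel_left_pos)
    qed
  qed
  show ?thesis
  proof (cases "b \<le> a")
    case True
    then show ?thesis
      using ordered_case[OF assms(2)] by blast
  next
    case False
    then have "LM b a \<le> AM b a"
      using ordered_case[OF assms(1)] by simp
    then show ?thesis
      by (simp only: LM_commute[of a] AM_commute[of a])
  qed
qed

lemma LMw_add_LMw:
  fixes a b v :: real
  assumes "0 < a" "0 < b" "a \<noteq> b" "0 < v" "v < 1"
  shows "v * (1 - v) * (ln a - ln b) * (LMw v a b + LMw (1 - v) a b)
       = ((1 - v)\<^sup>2 + v\<^sup>2) * (a - b)
         - (1 - 2 * v) * (a powr (1 - v) * b powr v - a powr v * b powr (1 - v))"
proof -
  define D where "D = ln a - ln b"
  define G where "G = a powr (1 - v) * b powr v"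
  define H where "H = a powr v * b powr (1 - v)"
  define \<alpha> where "\<alpha> = (1 - v) / v"
  define \<beta> where "\<beta> = v / (1 - v)"
  have "D \<noteq> 0"
    using assms by (simp add: D_def)
  have "LMw v a b + LMw (1 - v) a b = (\<alpha> * (a - G) + \<beta> * (G - b) + (\<beta> * (a - H) + \<alpha> * (H - b))) / D"
    using assms by (simp add: LMw_def D_def G_def H_def \<alpha>_def \<beta>_def add_divide_distrib)
  also have "\<dots> = (\<alpha> * (a - b - (G - H)) + \<beta> * (a - b + (G - H))) / D"
    by (simp add: algebra_simps)
  finally have "D * (LMw v a b + LMw (1 - v) a b) = \<alpha> * (a - b - (G - H)) + \<beta> * (a - b + (G - H))"
    using \<open>D \<noteq> 0\<close> by simp
  then have "v * (1 - v) * (D * (LMw v a b + LMw (1 - v) a b))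
      = v * (1 - v) * \<alpha> * (a - b - (G - H)) + v * (1 - v) * \<beta> * (a - b + (G - H))"
    by (simp add: distrib_left mult.assoc)
  also have "\<dots> = (1 - v)\<^sup>2 * (a - b - (G - H)) + v\<^sup>2 * (a - b + (G - H))"
    using assms by (simp add: \<alpha>_def \<beta>_def power2_eq_square)
  finally show ?thesis
    unfolding D_def G_def H_def by (simp add: algebra_simps power2_eq_square)
qed

lemma AM_LMw_exp_coordinates:
  fixes m u v w :: real
  assumes "0 < m" "u \<noteq> 0" "0 < v" "v < 1" "w = 1 - 2 * v"
  shows "(1 - w\<^sup>2) * u
           * AM (LMw v (m * exp u) (m * exp (- u))) (LMw (1 - v) (m * exp u) (m * exp (- u)))
       = m * ((1 + w\<^sup>2) * sinh u - 2 * w * sinh (w * u))"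
proof -
  let ?a = "m * exp u" and ?b = "m * exp (- u)"
  have "ln ?a - ln ?b = 2 * u"
    using assms by (simp add: ln_mult)
  moreover have "?a - ?b = 2 * m * sinh u"
    by (simp add: sinh_field_def field_simps)
  moreover have "?a powr (1 - v) * ?b powr v - ?a powr v * ?b powr (1 - v) = 2 * m * sinh (w * u)"
  proof -
    have "?a powr (1 - v) * ?b powr v = m * exp (w * u)"
      using powr_exp_coordinates[OF assms(1), of u v] assms(5) by simp
    moreover have "?a powr v * ?b powr (1 - v) = m * exp (- (w * u))"
      using powr_exp_coordinates[OF assms(1), of u "1 - v"] unfolding assms(5) by (simp add: algebra_simps)
    ultimately show ?thesis
      by (simp add: sinh_field_def field_simps)
  qed
  moreover have "?a \<noteq> ?b"
    using assms by simp
  ultimately have sum: "v * (1 - v) * (2 * u) * (LMw v ?a ?b + LMw (1 - v) ?a ?b)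
       = ((1 - v)\<^sup>2 + v\<^sup>2) * (2 * m * sinh u) - w * (2 * m * sinh (w * u))"
    using LMw_add_LMw[of ?a ?b v] assms by simp
  have "1 - w\<^sup>2 = 4 * v * (1 - v)" "1 + w\<^sup>2 = 2 * ((1 - v)\<^sup>2 + v\<^sup>2)"
    unfolding assms(5) by (simp_all add: power2_eq_square algebra_simps)
  then have "(1 - w\<^sup>2) * u * AM (LMw v ?a ?b) (LMw (1 - v) ?a ?b)
      = v * (1 - v) * (2 * u) * (LMw v ?a ?b + LMw (1 - v) ?a ?b)"
    unfolding AM_def by simp
  also have "\<dots> = m * ((1 + w\<^sup>2) * sinh u - 2 * w * sinh (w * u))"
    unfolding sum \<open>1 + w\<^sup>2 = _\<close> by (simp add: algebra_simps)
  finally show ?thesis .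
qed

lemma AM_LMw_bounds_ordered:
  fixes a b v :: real
  assumes "0 < b" "b < a" "0 < v" "v < 1"
  shows "LM a b \<le> AM (LMw v a b) (LMw (1 - v) a b) \<and> AM (LMw v a b) (LMw (1 - v) a b) \<le> AM a b"
proof -
  obtain m u where mu: "0 < m" "0 \<le> u" "a = m * exp u" "b = m * exp (- u)"
    using exp_coordinates[OF assms(1) less_imp_le[OF assms(2)]] .
  have "u \<noteq> 0"
    using mu assms(2) by auto
  define w where "w = 1 - 2 * v"
  define z where "z = \<bar>w\<bar>"
  define c where "c = (1 - z\<^sup>2) * u"
  define S where "S = AM (LMw v a b) (LMw (1 - v) a b)"
  have z: "0 \<le> z" "z < 1"
    using assms by (auto simp: z_def w_def abs_less_iff)
  then have "0 < c"
    using mu \<open>u \<noteq> 0\<close> by (simp add: c_def power_less_one_iff)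
  have "w * sinh (w * u) = z * sinh (z * u)" "w\<^sup>2 = z\<^sup>2"
    by (cases "0 \<le> w"; simp add: z_def)+
  then have S: "c * S = m * ((1 + z\<^sup>2) * sinh u - 2 * z * sinh (z * u))"
    using AM_LMw_exp_coordinates[OF mu(1) \<open>u \<noteq> 0\<close> assms(3,4) w_def]
    unfolding S_def c_def mu by (simp add: mult.assoc)
  have "z * sinh (z * u) \<le> z * (z * sinh u)"
    using sinh_mult_le[of z u] z mu by (intro mult_left_mono) auto
  then have lower: "(1 - z\<^sup>2) * sinh u \<le> (1 + z\<^sup>2) * sinh u - 2 * z * sinh (z * u)"
    by (simp add: algebra_simps power2_eq_square)
  have "c * LM a b = (1 - z\<^sup>2) * (u * LM a b)"
    by (simp add: c_def mult.assoc)
  also have "\<dots> = m * ((1 - z\<^sup>2) * sinh u)"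
    using LM_exp_coordinates[OF mu(1) \<open>u \<noteq> 0\<close>] mu by simp
  also have "\<dots> \<le> c * S"
    unfolding S using lower mu by (intro mult_left_mono) auto
  finally have "c * LM a b \<le> c * S" .
  moreover have "c * S \<le> m * ((1 - z\<^sup>2) * u * cosh u)"
    unfolding S using sinh_combination_le[of u z] mu z by (intro mult_left_mono) auto
  moreover have "m * ((1 - z\<^sup>2) * u * cosh u) = c * AM a b"
    using mu by (simp add: AM_exp_coordinates c_def)
  ultimately show ?thesis
    using \<open>0 < c\<close> unfolding S_def by (simp add: mult_le_cancel_left_pos)
qed

lemma AM_LMw_bounds:
  fixes a b v :: real
  assumes "0 \<le> v" "v \<le> 1" "0 < a" "0 < b"
  shows "LM a b \<le> AM (LMw v a b) (LMw (1 - v) a b) \<and> AM (LMw v a b) (LMw (1 - v) a b) \<le> AM a b"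
proof -
  consider "a = b" | "v = 0 \<or> v = 1" | "a \<noteq> b" "0 < v" "v < 1"
    using assms by linarith
  then show ?thesis
  proof cases
    case 1
    then show ?thesis by (simp add: LMw_def LM_def AM_def)
  next
    case 2
    then show ?thesis
      using LM_le_AM[OF assms(3,4)] by (auto simp: LMw_def AM_commute)
  next
    case 3
    show ?thesis
    proof (cases "b < a")
      case True
      show ?thesis
        by (rule AM_LMw_bounds_ordered[OF assms(4) True 3(2,3)])
    next
      case False
      with 3 have "LM b a \<le> AM (LMw (1 - v) b a) (LMw v b a)
                   \<and> AM (LMw (1 - v) b a) (LMw v b a) \<le> AM b a"
        using AM_LMw_bounds_ordered[of a b "1 - v"] assms by simp
      moreover have "LMw (1 - v) b a = LMw v a b"
        using LMw_commute[of "1 - v" b a] by simp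
      ultimately show ?thesis
        by (simp add: LMw_commute[of v b a] LM_commute[of b] AM_commute[of b]
            AM_commute[of "LMw (1 - v) a b"])
    qed
  qed
qed

lemma LM_centered_artanh:
  fixes p e :: real
  assumes "0 < e" "e < p"
  shows "LM (p + e) (p - e) = e / artanh (e / p)"
proof -
  have "(1 + e / p) / (1 - e / p) = (p + e) / (p - e)"
    using assms by (simp add: field_simps)
  then have "ln (p + e) - ln (p - e) = 2 * artanh (e / p)"
    using assms by (simp add: artanh_def ln_div)
  then have "LM (p + e) (p - e) = 2 * e / (2 * artanh (e / p))"
    using assms by (simp add: LM_def)
  then show ?thesis
    by simp
qed

lemma LM_centered_antimono:
  fixes p e\<^sub>1 e\<^sub>2 :: real
  assumes "0 \<le> e\<^sub>1" "e\<^sub>1 \<le> e\<^sub>2" "e\<^sub>2 < p"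
  shows "LM (p + e\<^sub>2) (p - e\<^sub>2) \<le> LM (p + e\<^sub>1) (p - e\<^sub>1)"
proof (cases "e\<^sub>1 = 0")
  case True
  have "LM (p + e\<^sub>2) (p - e\<^sub>2) \<le> AM (p + e\<^sub>2) (p - e\<^sub>2)"
    using assms by (intro LM_le_AM) auto
  then show ?thesis
    using True by (simp add: AM_def LM_def)
next
  case False
  define x\<^sub>1 x\<^sub>2 where "x\<^sub>1 = e\<^sub>1 / p" and "x\<^sub>2 = e\<^sub>2 / p"
  have x: "0 < x\<^sub>1" "x\<^sub>1 \<le> x\<^sub>2" "x\<^sub>2 < 1"
    using assms False by (auto simp: x\<^sub>1_def x\<^sub>2_def divide_right_mono)
  have "0 < e\<^sub>2"
    using assms False by linarith
  have "artanh x\<^sub>1 = artanh (e\<^sub>1 / e\<^sub>2 * x\<^sub>2)"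
    using \<open>0 < e\<^sub>2\<close> by (simp add: x\<^sub>1_def x\<^sub>2_def)
  also have "\<dots> \<le> e\<^sub>1 / e\<^sub>2 * artanh x\<^sub>2"
    using assms x \<open>0 < e\<^sub>2\<close> by (intro convex_on_scale_le[OF convex_on_artanh_nonneg]) auto
  finally have "e\<^sub>2 * artanh x\<^sub>1 \<le> e\<^sub>1 * artanh x\<^sub>2"
    using \<open>0 < e\<^sub>2\<close> by (simp add: field_simps)
  then have "e\<^sub>2 / artanh x\<^sub>2 \<le> e\<^sub>1 / artanh x\<^sub>1"
    using x artanh_pos[of x\<^sub>1] artanh_pos[of x\<^sub>2] by (simp add: field_simps)
  then show ?thesis
    using assms False by (simp add: LM_centered_artanh x\<^sub>1_def x\<^sub>2_def)
qed

lemma LM_centered_abs: "LM (p + e) (p - e) = LM (p + \<bar>e\<bar>) (p - \<bar>e\<bar>)"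
  by (cases "0 \<le> e") (simp_all add: LM_commute[of "p + e"])

lemma LM_AMw_bounds:
  fixes a b v :: real
  assumes "0 \<le> v" "v \<le> 1" "0 < a" "0 < b"
  shows "LM a b \<le> LM (AMw v a b) (AMw (1 - v) a b) \<and> LM (AMw v a b) (AMw (1 - v) a b) \<le> AM a b"
proof -
  define p d where "p = (a + b) / 2" and "d = (a - b) / 2"
  have ab: "a = p + d" "b = p - d" "AM a b = p"
    by (simp_all add: p_def d_def AM_def field_simps)
  have AMw: "AMw v a b = p + (1 - 2 * v) * d" "AMw (1 - v) a b = p - (1 - 2 * v) * d"
    by (simp_all add: AMw_def p_def d_def field_simps)
  have "\<bar>(1 - 2 * v) * d\<bar> \<le> \<bar>d\<bar>" "\<bar>d\<bar> < p"
    using assms by (auto simp: abs_mult p_def d_def abs_le_iff mult_left_le_one_le)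
  then have "LM (p + \<bar>d\<bar>) (p - \<bar>d\<bar>) \<le> LM (p + \<bar>(1 - 2 * v) * d\<bar>) (p - \<bar>(1 - 2 * v) * d\<bar>)"
       and "LM (p + \<bar>(1 - 2 * v) * d\<bar>) (p - \<bar>(1 - 2 * v) * d\<bar>) \<le> LM (p + 0) (p - 0)"
    by (intro LM_centered_antimono; simp)+
  moreover have "LM a b = LM (p + \<bar>d\<bar>) (p - \<bar>d\<bar>)"
    unfolding ab by (rule LM_centered_abs)
  moreover have "LM (AMw v a b) (AMw (1 - v) a b) = LM (p + \<bar>(1 - 2 * v) * d\<bar>) (p - \<bar>(1 - 2 * v) * d\<bar>)"
    unfolding AMw by (rule LM_centered_abs)
  moreover have "LM (p + 0) (p - 0) = AM a b"
    using ab(3) by (simp add: LM_def)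
  ultimately show ?thesis
    by simp
qed

theorem theorem2p10:
  fixes v a b :: real
  assumes "0 \<le> v" "v \<le> 1" "a > 0" "b > 0"
  shows "LM a b \<le> AM (LMw v a b) (LMw (1 - v) a b)
       \<and> AM (LMw v a b) (LMw (1 - v) a b) \<le> AM a b
       \<and> LM a b \<le> LM (AMw v a b) (AMw (1 - v) a b)
       \<and> LM (AMw v a b) (AMw (1 - v) a b) \<le> AM a b"
  using AM_LMw_bounds[OF assms] LM_AMw_bounds[OF assms] by blast

end
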